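(* Let $F(q,x)=\sum_{n\ge0}\sum_{\gamma\in\mathcal{D}_n} q^{\#duu(\gamma)}x^n$ and $V(q,x)=\sum_{n\ge0}\sum_{\gamma\in\mathcal{D}_n} q^{\#du(\gamma)}x^n$, where $\#w(\gamma)$ is the number of occurrences of the factor $w$ in $\gamma$ (so $\#du(\gamma)$ is the number of valleys). Let $SC_2(x)=\sum_{n\ge0} sc_2(\mathcal{D}_n)x^n$, where $sc_2(\mathcal{D}_n)$ is the number of saturated chains of length 2 in $\mathcal{D}_n$. Then $$ SC_2(x)=2\left[\frac{\partial F}{\partial q}\right]_{q=1}+\left[\frac{\partial^2 V}{\partial q^2}\right]_{q=1}. $$
   Context: A Dyck path of semilength $n$ is a lattice path from $(0,0)$ to $(2n,0)$ with steps $u=(1,1)$ and $d=(1,-1)$ never going below the $x$-axis, identified with a word over $\{u,d\}$. $\mathcal{D}_n$ is the set of Dyck paths of semilength $n$ ordered by containment: $\gamma\le\gamma'$ iff $\gamma$ lies weakly below $\gamma'$. A saturated chain of length $h$ is a sequence $\gamma^{(0)}<\cdots<\gamma^{(h)}$ in which each element covers the previous one. *)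

theory Defs
  imports "HOL-Computational_Algebra.Polynomial" "HOL-Computational_Algebra.Formal_Power_Series"
begin

text \<open>Dyck paths are words over {u,d}; we encode u as True and d as False.\<close>

definition ustep :: bool where "ustep = True"
definition dstep :: bool where "dstep = False"

definition height :: "bool list \<Rightarrow> nat \<Rightarrow> int" where
  "height w i = (\<Sum>s\<leftarrow>take i w. if s then 1 else -1)"

definition dyck_paths :: "nat \<Rightarrow> bool list set" where
  "dyck_paths n = {w. length w = 2 * n \<and> (\<forall>i\<le>length w. height w i \<ge> 0)
                      \<and> height w (length w) = 0}"

definition path_le :: "bool list \<Rightarrow> bool list \<Rightarrow> bool" where
  "path_le g g' \<longleftrightarrow> length g = length g' \<and> (\<forall>i\<le>length g. height g i \<le> height g' i)"

definition path_lt :: "bool list \<Rightarrow> bool list \<Rightarrow> bool" where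
  "path_lt g g' \<longleftrightarrow> path_le g g' \<and> g \<noteq> g'"

definition covers_in :: "nat \<Rightarrow> bool list \<Rightarrow> bool list \<Rightarrow> bool" where
  "covers_in n g g' \<longleftrightarrow> g \<in> dyck_paths n \<and> g' \<in> dyck_paths n \<and> path_lt g g' \<and>
     \<not> (\<exists>h\<in>dyck_paths n. path_lt g h \<and> path_lt h g')"

definition sc2 :: "nat \<Rightarrow> nat" where
  "sc2 n = card {(a, b, c). a \<in> dyck_paths n \<and> b \<in> dyck_paths n \<and> c \<in> dyck_paths n
                 \<and> covers_in n a b \<and> covers_in n b c}"

definition occ :: "bool list \<Rightarrow> bool list \<Rightarrow> nat" where
  "occ w g = card {i. i + length w \<le> length g \<and> take (length w) (drop i g) = w}"

text \<open>Bivariate generating functions: power series in x with polynomial coefficients in q.\<close>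
definition F_gf :: "real poly fps" where
  "F_gf = Abs_fps (\<lambda>n. \<Sum>g\<in>dyck_paths n. monom 1 (occ [dstep, ustep, ustep] g))"

definition V_gf :: "real poly fps" where
  "V_gf = Abs_fps (\<lambda>n. \<Sum>g\<in>dyck_paths n. monom 1 (occ [dstep, ustep] g))"

definition SC2_gf :: "real fps" where
  "SC2_gf = Abs_fps (\<lambda>n. real (sc2 n))"

definition dq :: "real poly fps \<Rightarrow> real poly fps" where
  "dq A = Abs_fps (\<lambda>n. pderiv (fps_nth A n))"

definition at_q1 :: "real poly fps \<Rightarrow> real fps" where
  "at_q1 A = Abs_fps (\<lambda>n. poly (fps_nth A n) 1)"

end

theory Submission
  imports Defs
begin

text \<open>
  A Dyck path is covered in \<open>\<D>\<^sub>n\<close> exactly by the paths obtained from it by turning one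
  valley \<open>du\<close> into a peak \<open>ud\<close>. Filling valley \<open>i\<close> destroys that valley, keeps all the
  others, and creates a new valley at \<open>i - 1\<close> iff the valley is the end of a factor \<open>ddu\<close>,
  and at \<open>i + 1\<close> iff it is the start of a factor \<open>duu\<close>. So a path with \<open>v\<close> valleys is the
  bottom of \<open>v(v - 1) + #ddu + #duu\<close> saturated chains of length 2. Reversing and
  complementing a path is a bijection of \<open>\<D>\<^sub>n\<close> exchanging \<open>ddu\<close> and \<open>duu\<close>, so summing over
  \<open>\<D>\<^sub>n\<close> gives \<open>sc\<^sub>2(\<D>\<^sub>n) = 2 \<Sum> #duu + \<Sum> #du (#du - 1)\<close>, which is the coefficient
  of \<open>x\<^sup>n\<close> on the right-hand side.
\<close>

lemma height_0 [simp]: "height w 0 = 0"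
  by (simp add: height_def)

lemma height_Suc:
  "height w (Suc j) = height w j + (if j < length w then (if w ! j then 1 else -1) else 0)"
  by (cases "j < length w") (simp_all add: height_def take_Suc_conv_app_nth)

lemma height_mod_2: "j \<le> length w \<Longrightarrow> height w j mod 2 = int j mod 2"
proof (induction j)
  case (Suc j)
  then have "height w (Suc j) = height w j + (if w ! j then 1 else -1)"
    by (simp add: height_Suc)
  with Suc show ?case
    by (cases "w ! j") (simp_all, presburger+)
qed simp

lemma height_gap_ge_2:
  assumes "length a = length b" "j \<le> length a" "height a j < height b j"
  shows "height a j + 2 \<le> height b j"
  using assms height_mod_2[of j a] height_mod_2[of j b] by presburger

lemma nth_iff_height_increases: "i < length w \<Longrightarrow> w ! i \<longleftrightarrow> height w i < height w (Suc i)"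
  by (simp add: height_Suc)

lemma list_eq_by_height:
  assumes "length g = length h" "\<And>i. i \<le> length g \<Longrightarrow> height g i = height h i"
  shows "g = h"
proof (rule nth_equalityI)
  fix i assume "i < length g"
  then show "g ! i = h ! i"
    using assms nth_iff_height_increases[of i g] nth_iff_height_increases[of i h] by simp
qed (fact assms)

lemma finite_dyck_paths [simp]: "finite (dyck_paths n)"
proof (rule finite_subset)
  show "dyck_paths n \<subseteq> {w. set w \<subseteq> UNIV \<and> length w = 2 * n}"
    by (auto simp: dyck_paths_def)
qed (rule finite_lists_length_eq, simp)

section \<open>Covers are valley fillings\<close>

definition valley :: "bool list \<Rightarrow> nat \<Rightarrow> bool" where
  "valley a i \<longleftrightarrow> Suc i < length a \<and> \<not> a ! i \<and> a ! Suc i"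

definition fill_valley :: "bool list \<Rightarrow> nat \<Rightarrow> bool list" where
  "fill_valley a i = a[i := True, Suc i := False]"

lemma length_fill_valley [simp]: "length (fill_valley a i) = length a"
  by (simp add: fill_valley_def)

lemma height_fill_valley:
  assumes "valley a i"
  shows "height (fill_valley a i) j = height a j + (if j = Suc i then 2 else 0)"
proof (induction j)
  case (Suc j)
  with assms show ?case
    by (cases "j = i"; cases "j = Suc i") (simp_all add: height_Suc fill_valley_def valley_def)
qed simp

lemma fill_valley_in_dyck_paths:
  "a \<in> dyck_paths n \<Longrightarrow> valley a i \<Longrightarrow> fill_valley a i \<in> dyck_paths n"
  by (auto simp: dyck_paths_def height_fill_valley valley_def)

lemma path_lt_fill_valley:
  assumes "valley a i"
  shows "path_lt a (fill_valley a i)"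
proof -
  have "fill_valley a i \<noteq> a"
    using height_fill_valley[OF assms, of "Suc i"] by force
  with assms show ?thesis
    by (auto simp: path_lt_def path_le_def height_fill_valley)
qed

lemma between_fill_valley:
  assumes v: "valley a i" and "path_le a h" "path_le h (fill_valley a i)"
  shows "h = a \<or> h = fill_valley a i"
proof -
  have len: "length h = length a" using assms(2) by (simp add: path_le_def)
  have bounds: "height a j \<le> height h j"
      "height h j \<le> height a j + (if j = Suc i then 2 else 0)" if "j \<le> length a" for j
    using that assms by (auto simp: path_le_def height_fill_valley)
  have "Suc i \<le> length a" using v by (simp add: valley_def)
  then have "height h (Suc i) = height a (Suc i) \<or> height h (Suc i) = height a (Suc i) + 2"
    using bounds[of "Suc i"] len height_gap_ge_2[of a h "Suc i"] by fastforce
  then show ?thesis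
  proof
    assume at_i: "height h (Suc i) = height a (Suc i)"
    have "height h j = height a j" if "j \<le> length h" for j
      using bounds[of j] at_i that len by (cases "j = Suc i") auto
    then show ?thesis
      using len list_eq_by_height by blast
  next
    assume at_i: "height h (Suc i) = height a (Suc i) + 2"
    have "height h j = height (fill_valley a i) j" if "j \<le> length h" for j
      using bounds[of j] at_i that len by (cases "j = Suc i") (auto simp: height_fill_valley v)
    then show ?thesis
      using len list_eq_by_height[of h "fill_valley a i"] by simp
  qed
qed

lemma covers_in_fill_valley:
  assumes "a \<in> dyck_paths n" "valley a i"
  shows "covers_in n a (fill_valley a i)"
  using assms between_fill_valley[of a i] fill_valley_in_dyck_paths path_lt_fill_valley
  by (auto simp: covers_in_def path_lt_def)

lemma fill_valley_le:
  assumes "valley a i" "path_le a b" "height a (Suc i) + 2 \<le> height b (Suc i)"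
  shows "path_le (fill_valley a i) b"
  using assms by (auto simp: path_le_def height_fill_valley)

lemma path_lt_strictly_below_somewhere:
  assumes "path_lt a b"
  obtains j where "j \<le> length a" "height a j < height b j"
proof (rule ccontr)
  assume "\<not> thesis"
  with that have "height a j = height b j" if "j \<le> length a" for j
    using assms \<open>j \<le> length a\<close> by (force simp: path_lt_def path_le_def)
  then have "a = b"
    using assms by (intro list_eq_by_height) (auto simp: path_lt_def path_le_def)
  with assms show False by (simp add: path_lt_def)
qed

text \<open>
  Below a strictly larger path \<open>b\<close>, the lowest point of \<open>a\<close> among those where \<open>a\<close> lies
  strictly below \<open>b\<close> is a valley bottom: otherwise a neighbouring point would be lower and
  still strictly below \<open>b\<close>.
\<close>

lemma valley_below:
  assumes a: "a \<in> dyck_paths n" and b: "b \<in> dyck_paths n" and lt: "path_lt a b"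
  obtains i where "valley a i" "path_le (fill_valley a i) b"
proof -
  have len: "length b = length a"
    using lt by (simp add: path_lt_def path_le_def)
  have nonneg: "\<And>k. k \<le> length a \<Longrightarrow> 0 \<le> height a k"
    using a by (simp add: dyck_paths_def)
  define S where "S = {j. j \<le> length a \<and> height a j < height b j}"
  have "S \<noteq> {}"
    using path_lt_strictly_below_somewhere[OF lt] by (auto simp: S_def)
  then obtain j where j: "j \<in> S"
    and lowest_nat: "\<And>k. k \<in> S \<Longrightarrow> nat (height a j) \<le> nat (height a k)"
    using ex_has_least_nat[of "\<lambda>j. j \<in> S" _ "\<lambda>j. nat (height a j)"] by blast
  have lowest: "\<And>k. k \<in> S \<Longrightarrow> height a j \<le> height a k"
    using lowest_nat nonneg j by (force simp: S_def)
  have gap: "height a j + 2 \<le> height b j"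
    using j len by (intro height_gap_ge_2) (auto simp: S_def)
  have "j \<noteq> 0" using j by (cases j) (auto simp: S_def)
  moreover have "j \<noteq> length a"
    using j a b len by (auto simp: S_def dyck_paths_def)
  ultimately obtain p where jp: "j = Suc p" and p: "Suc p < length a"
    using j by (cases j) (auto simp: S_def)
  have "\<not> a ! p"
  proof
    assume "a ! p"
    then have "p \<in> S" using gap jp p len height_Suc[of a p] height_Suc[of b p]
      by (auto simp: S_def split: if_splits)
    with lowest \<open>a ! p\<close> jp p show False using height_Suc[of a p] by fastforce
  qed
  moreover have "a ! j"
  proof (rule ccontr)
    assume "\<not> a ! j"
    then have "Suc j \<in> S" using gap jp p len height_Suc[of a j] height_Suc[of b j]
      by (auto simp: S_def split: if_splits)
    with lowest \<open>\<not> a ! j\<close> jp p show False using height_Suc[of a j] by fastforce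
  qed
  ultimately have v: "valley a p" using jp p by (simp add: valley_def)
  moreover have "path_le (fill_valley a p) b"
    using v lt gap jp by (intro fill_valley_le) (auto simp: path_lt_def)
  ultimately show ?thesis by (rule that)
qed

lemma covers_in_iff:
  "covers_in n a b \<longleftrightarrow> a \<in> dyck_paths n \<and> (\<exists>i. valley a i \<and> b = fill_valley a i)"
proof
  assume c: "covers_in n a b"
  then have a: "a \<in> dyck_paths n" and b: "b \<in> dyck_paths n" and "path_lt a b"
    by (auto simp: covers_in_def)
  then obtain i where v: "valley a i" and "path_le (fill_valley a i) b"
    by (rule valley_below)
  moreover have "\<not> path_lt (fill_valley a i) b"
    using c v a path_lt_fill_valley fill_valley_in_dyck_paths by (auto simp: covers_in_def)
  ultimately show "a \<in> dyck_paths n \<and> (\<exists>i. valley a i \<and> b = fill_valley a i)"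
    using a by (auto simp: path_lt_def)
qed (auto intro: covers_in_fill_valley)

section \<open>Counting saturated chains\<close>

definition valleys :: "bool list \<Rightarrow> nat set" where
  "valleys a = {i. valley a i}"

definition duu_positions :: "bool list \<Rightarrow> nat set" where
  "duu_positions a = {k. k + 3 \<le> length a \<and> \<not> a ! k \<and> a ! Suc k \<and> a ! Suc (Suc k)}"

definition ddu_positions :: "bool list \<Rightarrow> nat set" where
  "ddu_positions a = {k. k + 3 \<le> length a \<and> \<not> a ! k \<and> \<not> a ! Suc k \<and> a ! Suc (Suc k)}"

lemma finite_valleys [simp]: "finite (valleys a)"
  by (rule finite_subset[of _ "{..<length a}"]) (auto simp: valleys_def valley_def)

lemma inj_on_fill_valley: "inj_on (fill_valley a) (valleys a)"
proof
  fix i k assume i: "i \<in> valleys a" and k: "k \<in> valleys a"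
    and eq: "fill_valley a i = fill_valley a k"
  have "fill_valley a i ! i" "fill_valley a k ! i \<longleftrightarrow> i = k"
    using i k by (auto simp: valleys_def valley_def fill_valley_def nth_list_update)
  with eq show "i = k" by simp
qed

lemma sc2_eq_sum_valleys_fill_valley:
  "sc2 n = (\<Sum>a\<in>dyck_paths n. \<Sum>i\<in>valleys a. card (valleys (fill_valley a i)))"
proof -
  have "{(a, b, c). a \<in> dyck_paths n \<and> b \<in> dyck_paths n \<and> c \<in> dyck_paths n
                 \<and> covers_in n a b \<and> covers_in n b c}
      = (SIGMA a:dyck_paths n. SIGMA b:fill_valley a ` valleys a. fill_valley b ` valleys b)"
    by (auto simp: covers_in_iff valleys_def fill_valley_in_dyck_paths)
  then have "sc2 n = (\<Sum>a\<in>dyck_paths n. \<Sum>b\<in>fill_valley a ` valleys a. card (valleys b))"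
    by (simp add: sc2_def card_SigmaI card_image inj_on_fill_valley)
  then show ?thesis
    by (simp add: sum.reindex inj_on_fill_valley)
qed

lemma valleys_fill_valley:
  assumes "valley a i"
  shows "valleys (fill_valley a i) = (valleys a - {i})
           \<union> (if i \<in> Suc ` ddu_positions a then {i - 1} else {})
           \<union> (if i \<in> duu_positions a then {Suc i} else {})"
proof (rule set_eqI)
  fix k
  show "k \<in> valleys (fill_valley a i) \<longleftrightarrow> k \<in> (valleys a - {i})
           \<union> (if i \<in> Suc ` ddu_positions a then {i - 1} else {})
           \<union> (if i \<in> duu_positions a then {Suc i} else {})"
    using assms
    by (cases i; cases "k < i - 1"; cases "k = i - 1"; cases "k = i"; cases "k = Suc i")
       (auto simp: valleys_def valley_def fill_valley_def nth_list_update
         ddu_positions_def duu_positions_def image_iff)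
qed

lemma valley_positions_subset:
  "Suc ` ddu_positions a \<subseteq> valleys a" "duu_positions a \<subseteq> valleys a"
  by (auto simp: valleys_def valley_def ddu_positions_def duu_positions_def)

lemma card_valleys_fill_valley:
  assumes v: "valley a i"
  shows "card (valleys (fill_valley a i)) = (card (valleys a) - 1)
           + (if i \<in> Suc ` ddu_positions a then 1 else 0) + (if i \<in> duu_positions a then 1 else 0)"
proof -
  have "i \<in> valleys a" using v by (simp add: valleys_def)
  moreover have "i - 1 \<notin> valleys a - {i}" "Suc i \<notin> valleys a - {i}" "i - 1 \<noteq> Suc i"
    using v by (auto simp: valleys_def valley_def)
  ultimately show ?thesis
    by (cases "i \<in> Suc ` ddu_positions a"; cases "i \<in> duu_positions a")
       (simp_all add: valleys_fill_valley[OF v] card_Diff_singleton)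
qed

lemma sum_valleys_fill_valley:
  "(\<Sum>i\<in>valleys a. card (valleys (fill_valley a i))) =
     card (valleys a) * (card (valleys a) - 1) + card (ddu_positions a) + card (duu_positions a)"
proof -
  have "(\<Sum>i\<in>valleys a. card (valleys (fill_valley a i))) =
     (\<Sum>i\<in>valleys a. (card (valleys a) - 1)
        + (if i \<in> Suc ` ddu_positions a then 1 else 0) + (if i \<in> duu_positions a then 1 else 0))"
    by (intro sum.cong refl card_valleys_fill_valley) (simp add: valleys_def)
  also have "\<dots> = card (valleys a) * (card (valleys a) - 1)
      + card (Suc ` ddu_positions a) + card (duu_positions a)"
    using valley_positions_subset[of a]
    by (simp add: sum.distrib sum.If_cases Int_absorb1 Int_absorb2)
  finally show ?thesis by (simp add: card_image)
qed

section \<open>The reverse-complement symmetry\<close>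

definition mirror :: "bool list \<Rightarrow> bool list" where
  "mirror a = rev (map Not a)"

lemma mirror_mirror [simp]: "mirror (mirror a) = a"
  by (simp add: mirror_def rev_map comp_def)

lemma length_mirror [simp]: "length (mirror a) = length a"
  by (simp add: mirror_def)

lemma nth_mirror: "k < length a \<Longrightarrow> mirror a ! k \<longleftrightarrow> \<not> a ! (length a - Suc k)"
  by (simp add: mirror_def rev_nth)

lemma height_mirror:
  "i \<le> length a \<Longrightarrow> height (mirror a) i = height a (length a - i) - height a (length a)"
proof (induction i)
  case (Suc i)
  then have "length a - i = Suc (length a - Suc i)" by simp
  with Suc show ?case
    by (simp add: height_Suc nth_mirror)
qed simp

lemma mirror_in_dyck_paths: "a \<in> dyck_paths n \<Longrightarrow> mirror a \<in> dyck_paths n"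
  by (auto simp: dyck_paths_def height_mirror)

lemma bij_betw_mirror: "bij_betw mirror (dyck_paths n) (dyck_paths n)"
  by (rule bij_betw_byWitness[of _ mirror]) (auto intro: mirror_in_dyck_paths)

lemma card_ddu_positions_mirror: "card (ddu_positions (mirror a)) = card (duu_positions a)"
proof -
  let ?r = "\<lambda>k. length a - 3 - k"
  have "bij_betw ?r (duu_positions a) (ddu_positions (mirror a))"
    by (rule bij_betw_byWitness[of _ ?r])
       (auto simp: ddu_positions_def duu_positions_def nth_mirror Suc_diff_Suc numeral_3_eq_3)
  then show ?thesis by (simp add: bij_betw_same_card)
qed

lemma sum_ddu_eq_sum_duu:
  "(\<Sum>a\<in>dyck_paths n. card (ddu_positions a)) = (\<Sum>a\<in>dyck_paths n. card (duu_positions a))"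
  using sum.reindex_bij_betw[OF bij_betw_mirror, of "\<lambda>a. card (ddu_positions a)" n]
  by (simp add: card_ddu_positions_mirror)

lemma occ_du: "occ [dstep, ustep] g = card (valleys g)"
proof -
  have "take (Suc (Suc 0)) (drop i g) = [g ! i, g ! Suc i]" if "Suc (Suc i) \<le> length g" for i
    using that by (simp add: Cons_nth_drop_Suc[symmetric])
  then show ?thesis
    by (auto simp: occ_def valleys_def valley_def dstep_def ustep_def intro!: arg_cong[of _ _ card])
qed

lemma occ_duu: "occ [dstep, ustep, ustep] g = card (duu_positions g)"
proof -
  have "take (Suc (Suc (Suc 0))) (drop i g) = [g ! i, g ! Suc i, g ! Suc (Suc i)]"
    if "Suc (Suc (Suc i)) \<le> length g" for i
    using that by (simp add: Cons_nth_drop_Suc[symmetric])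
  then show ?thesis
    by (auto simp: occ_def duu_positions_def dstep_def ustep_def intro!: arg_cong[of _ _ card])
qed

lemma sc2_eq:
  "sc2 n = 2 * (\<Sum>a\<in>dyck_paths n. occ [dstep, ustep, ustep] a)
          + (\<Sum>a\<in>dyck_paths n. occ [dstep, ustep] a * (occ [dstep, ustep] a - 1))"
  by (simp add: sc2_eq_sum_valleys_fill_valley sum_valleys_fill_valley sum.distrib
      sum_ddu_eq_sum_duu occ_du occ_duu)

lemma pderiv_sum: "pderiv (\<Sum>x\<in>A. f x) = (\<Sum>x\<in>A. pderiv (f x))"
  using higher_pderiv_sum[of 1 f A] by simp

lemma poly_pderiv_sum_monom_at_1:
  "poly (pderiv (\<Sum>x\<in>A. monom 1 (k x))) 1 = (\<Sum>x\<in>A. real (k x))"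
  by (simp add: pderiv_sum pderiv_monom poly_sum poly_monom)

lemma poly_pderiv2_sum_monom_at_1:
  "poly (pderiv (pderiv (\<Sum>x\<in>A. monom 1 (k x)))) 1 = (\<Sum>x\<in>A. real (k x * (k x - 1)))"
  by (simp add: pderiv_sum pderiv_monom poly_sum poly_monom mult.commute)

theorem mainTheorem3:
  shows "SC2_gf = 2 * at_q1 (dq F_gf) + at_q1 (dq (dq V_gf))"
proof (rule fps_ext)
  fix n
  have "fps_nth (2 * at_q1 (dq F_gf)) n = 2 * (\<Sum>a\<in>dyck_paths n. real (occ [dstep, ustep, ustep] a))"
    by (simp add: numeral_fps_const at_q1_def dq_def F_gf_def poly_pderiv_sum_monom_at_1)
  moreover have "fps_nth (at_q1 (dq (dq V_gf))) n
      = (\<Sum>a\<in>dyck_paths n. real (occ [dstep, ustep] a * (occ [dstep, ustep] a - 1)))"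
    by (simp add: at_q1_def dq_def V_gf_def poly_pderiv2_sum_monom_at_1)
  ultimately show "fps_nth SC2_gf n = fps_nth (2 * at_q1 (dq F_gf) + at_q1 (dq (dq V_gf))) n"
    by (simp add: SC2_gf_def sc2_eq)
qed

end
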